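(* Let $K$ be a sequence of positive integers approaching $\infty$, let $s\ge2$ be an integer, let $\mathbf b\in\mathcal{F}_s$, and let $A_{\mathbf b}=\{n\in\mathbb{N}:\mathrm{LB}_s(K_n)=\mathbf b\}$. Then there are real numbers $\gamma_n=o(1)$ and $\widetilde\gamma_n=o(1)$ such that $n\in A_{\mathbf b}$ if and only if $$\log_\phi(\mathbf b\cdot\widehat F)+\gamma_n\le\{\mathfrak F^{-1}(K_n)\}<\log_\phi(\widetilde{\mathbf b}\cdot\widehat F)+\widetilde\gamma_n,$$ where $\widetilde\gamma_n=0$ if $\mathbf b$ is the largest block in $\mathcal{F}_s$.
   Context: $F$: $F_1=1,F_2=2,F_{n+2}=F_{n+1}+F_n$. Zeckendorf expansion: $m=\sum_{k=1}^M\epsilon(k)F_{M-k+1}$ uniquely with $\epsilon(k)\in\{0,1\}$, $\epsilon(1)=1$, $\epsilon(k)\epsilon(k+1)=0$; $\mathrm{LB}_s(m)=(\epsilon(1),\dots,\epsilon(s))$ if $M\ge s$. $\mathcal{F}_s$ ($s\ge2$) is the set of all $\mathrm{LB}_s(m)$, listed $\mathbf b_1,\dots,\mathbf b_\ell$ with $1+\mathbf b_k*F=\mathbf b_{k+1}*F$, $\mathbf b*F=\sum_{k=1}^s\mathbf b(k)F_{s-k+1}$; $\mathbf b_\ell$ is the largest block. $\mathbf b_{\ell+1}:=(1,0,1,0,\dots,1,0,1,1)$ if $s$ even, $(1,0,1,0,\dots,1,1,0)$ if $s$ odd (length $s$); $\widetilde{\mathbf b_k}:=\mathbf b_{k+1}$.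 $\omega=\phi^{-1}$, $\mathbf b\cdot\widehat F=\sum_k\mathbf b(k)\omega^{k-1}$. $\mathfrak F(x)=\frac{\phi}{\sqrt5}(\phi^x+\phi^{-x}\cos(\pi x)\phi^{-2})$, increasing on $[1,\infty)$ with inverse $\mathfrak F^{-1}$; $\{y\}$ is the fractional part. *)

theory Defs
  imports Complex_Main
begin

text \<open>Fibonacci numbers with F_1 = 1, F_2 = 2 (F 0 = 1 is a harmless filler
 consistent with the recursion).\<close>
fun FF :: "nat \<Rightarrow> nat" where
  "FF 0 = 1"
| "FF (Suc 0) = 1"
| "FF (Suc (Suc n)) = FF (Suc n) + FF n"

text \<open>A digit list xs = (eps(1),...,eps(M)) is a Zeckendorf expansion of m.
 List index k (0-based) corresponds to eps(k+1), weighted by F_{M-k}.\<close>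
definition is_zeck :: "nat \<Rightarrow> nat list \<Rightarrow> bool" where
  "is_zeck m xs \<longleftrightarrow> xs \<noteq> [] \<and> set xs \<subseteq> {0, 1} \<and> xs ! 0 = 1
     \<and> (\<forall>k. Suc k < length xs \<longrightarrow> xs ! k * xs ! Suc k = 0)
     \<and> m = (\<Sum>k<length xs. xs ! k * FF (length xs - k))"

definition zeck :: "nat \<Rightarrow> nat list" where
  "zeck m = (THE xs. is_zeck m xs)"

definition LB_defined :: "nat \<Rightarrow> nat \<Rightarrow> bool" where
  "LB_defined s m \<longleftrightarrow> s \<le> length (zeck m)"

definition LB :: "nat \<Rightarrow> nat \<Rightarrow> nat list" where
  "LB s m = take s (zeck m)"

definition Fblocks :: "nat \<Rightarrow> nat list set" where
  "Fblocks s = {LB s m | m. m \<ge> 1 \<and> LB_defined s m}"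

definition blockval :: "nat list \<Rightarrow> nat" where
  "blockval b = (\<Sum>k<length b. b ! k * FF (length b - k))"

definition largest_block :: "nat \<Rightarrow> nat list \<Rightarrow> bool" where
  "largest_block s b \<longleftrightarrow> b \<in> Fblocks s \<and> (\<forall>b'\<in>Fblocks s. blockval b' \<le> blockval b)"

text \<open>b_{l+1}: (1,0,...,1,0,1,1) for s even, (1,0,...,1,1,0) for s odd (1-based positions k).\<close>
definition special_block :: "nat \<Rightarrow> nat list" where
  "special_block s = map (\<lambda>k. if even s then (if k = s \<or> odd k then 1 else 0)
        else (if k = s - 1 \<or> (odd k \<and> k < s) then 1 else 0)) [1..<s+1]"

definition next_block :: "nat \<Rightarrow> nat list \<Rightarrow> nat list" where
  "next_block s b = (if largest_block s b then special_block s
      else (THE b'. b' \<in> Fblocks s \<and> blockval b' = blockval b + 1))"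

definition phi :: real where "phi = (1 + sqrt 5) / 2"

definition omega :: real where "omega = 1 / phi"

definition dotFhat :: "nat list \<Rightarrow> real" where
  "dotFhat b = (\<Sum>k<length b. real (b ! k) * omega ^ k)"

definition frakF :: "real \<Rightarrow> real" where
  "frakF x = phi / sqrt 5 * (phi powr x + phi powr (- x) * cos (pi * x) * phi powr (-2))"

definition frakF_inv :: "real \<Rightarrow> real" where
  "frakF_inv y = (THE x. 1 \<le> x \<and> frakF x = y)"

end

(*
  Let xs be the Zeckendorf word of a large m, of length M, so that LB_s(m) = take s xs.
  Binet's formula gives sqrt 5 * m = phi^(M+1) * (xs . Fhat) + O(1), while frakF interpolates
  the Fibonacci numbers with sqrt 5 * frakF x = phi^(x+1) + O(phi^-x); as frakF_inv m lies in
  [M, M+1), comparing the two yields phi^frac(frakF_inv m) = xs . Fhat + O(1/m).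
  Lexicographic order on admissible words agrees both with the order of their values and with
  the order of their Fhat-weights, so the leading block is b exactly when
  b . Fhat <= xs . Fhat < b~ . Fhat.  Taking log_phi turns this into the window of the theorem,
  shifted by o(1); the finitely many small K_n are absorbed into the error sequences.
*)
theory Submission
  imports Defs
begin

section \<open>The golden ratio and Fibonacci numbers\<close>

lemma phi_gt_1: "phi > 1"
  unfolding phi_def by simp

lemma phi_pos: "phi > 0"
  using phi_gt_1 by simp

lemma phi_squared: "phi\<^sup>2 = phi + 1"
  unfolding phi_def by (simp add: power2_eq_square field_simps)

lemma sqrt5_eq: "sqrt 5 = 2 * phi - 1"
  unfolding phi_def by (simp add: field_simps)

lemma phi_times_omega: "phi * omega = 1"
  unfolding omega_def using phi_pos by simp

lemma omega_eq: "omega = phi - 1"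
  using phi_squared phi_pos unfolding omega_def by (simp add: field_simps power2_eq_square)

lemma omega_pos: "omega > 0"
  unfolding omega_def using phi_pos by simp

lemma omega_less_1: "omega < 1"
  unfolding omega_def using phi_gt_1 by simp

lemma omega_squared: "omega\<^sup>2 = 1 - omega"
  using phi_squared unfolding omega_eq by (simp add: power2_eq_square algebra_simps)

lemma omega_power_eq: "omega ^ n = inverse (phi ^ n)"
  unfolding omega_def by (simp add: power_inverse divide_inverse)

lemma phi_gt_8_5: "phi > 8/5"
proof -
  have "11/5 < sqrt (5::real)"
    by (rule real_less_rsqrt) (simp add: power2_eq_square)
  then show ?thesis unfolding phi_def by simp
qed

lemma FF_pos: "FF n \<ge> 1"
  by (induction n rule: FF.induct) auto

lemma FF_mono: "m \<le> n \<Longrightarrow> FF m \<le> FF n"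
proof (rule lift_Suc_mono_le[of FF])
  show "FF k \<le> FF (Suc k)" for k
    by (cases k) auto
qed

lemma binet: "sqrt 5 * real (FF n) = phi ^ Suc n - (1 - phi) ^ Suc n"
proof (induction n rule: FF.induct)
  case (3 n)
  have fib_power: "x ^ Suc (Suc (Suc n)) = x ^ Suc (Suc n) + x ^ Suc n" if "x\<^sup>2 = x + 1" for x :: real
  proof -
    have "x ^ Suc (Suc (Suc n)) = x ^ Suc n * x\<^sup>2"
      by (simp add: power2_eq_square)
    then show ?thesis using that by (simp add: algebra_simps)
  qed
  have "(1 - phi)\<^sup>2 = (1 - phi) + 1"
    using phi_squared by (simp add: power2_eq_square algebra_simps)
  then show ?case
    using 3 fib_power[OF phi_squared] fib_power[of "1 - phi"] by (simp add: algebra_simps)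
qed (use sqrt5_eq phi_squared in \<open>simp_all add: power2_eq_square algebra_simps\<close>)

section \<open>Zeckendorf words\<close>

fun admissible :: "nat list \<Rightarrow> bool" where
  "admissible [] = True"
| "admissible [x] = (x \<le> 1)"
| "admissible (x # y # zs) = (x \<le> 1 \<and> x * y = 0 \<and> admissible (y # zs))"

lemma admissible_Cons:
  "admissible (x # xs) \<longleftrightarrow> x \<le> 1 \<and> (xs \<noteq> [] \<longrightarrow> x * hd xs = 0) \<and> admissible xs"
  by (cases xs) auto

lemma admissible_iff:
  "admissible xs \<longleftrightarrow> set xs \<subseteq> {0, 1} \<and> (\<forall>k. Suc k < length xs \<longrightarrow> xs ! k * xs ! Suc k = 0)"
proof (induction xs)
  case (Cons x xs)
  have "(\<forall>k. Suc k < length (x # xs) \<longrightarrow> (x # xs) ! k * (x # xs) ! Suc k = 0) \<longleftrightarrow>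
      (xs \<noteq> [] \<longrightarrow> x * hd xs = 0) \<and> (\<forall>k. Suc k < length xs \<longrightarrow> xs ! k * xs ! Suc k = 0)"
    (is "?L \<longleftrightarrow> ?R")
  proof
    assume L: ?L
    show ?R
      using L[rule_format, of 0] L[rule_format, of "Suc _"] by (auto simp: hd_conv_nth)
  qed (auto simp: hd_conv_nth nth_Cons split: nat.split)
  then show ?case
    using Cons.IH by (auto simp: admissible_Cons)
qed simp

lemma blockval_Nil [simp]: "blockval [] = 0"
  unfolding blockval_def by simp

lemma blockval_Cons [simp]: "blockval (x # xs) = x * FF (Suc (length xs)) + blockval xs"
  unfolding blockval_def length_Cons sum.lessThan_Suc_shift by simp

lemma dotFhat_Nil [simp]: "dotFhat [] = 0"
  unfolding dotFhat_def by simp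

lemma dotFhat_Cons [simp]: "dotFhat (x # xs) = real x + omega * dotFhat xs"
  unfolding dotFhat_def length_Cons sum.lessThan_Suc_shift
  by (simp add: sum_distrib_left mult_ac)

lemma dotFhat_nonneg: "dotFhat xs \<ge> 0"
  unfolding dotFhat_def using omega_pos by (auto intro!: sum_nonneg)

lemma dotFhat_ge_1: "xs \<noteq> [] \<Longrightarrow> hd xs = 1 \<Longrightarrow> dotFhat xs \<ge> 1"
  using dotFhat_nonneg[of "tl xs"] omega_pos by (cases xs) auto

lemma dotFhat_take_le: "dotFhat (take s xs) \<le> dotFhat xs"
proof (induction xs arbitrary: s)
  case (Cons x xs)
  then show ?case
    using dotFhat_nonneg[of "x # xs"] mult_left_mono[OF Cons.IH less_imp_le[OF omega_pos]]
    by (cases s) auto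
qed simp

lemma blockval_less_FF:
  "admissible xs \<Longrightarrow> blockval xs < FF (Suc (length xs))
     \<and> (xs \<noteq> [] \<longrightarrow> hd xs = 0 \<longrightarrow> blockval xs < FF (length xs))"
proof (induction xs rule: admissible.induct)
  case (3 x y zs)
  then have IH: "blockval (y # zs) < FF (Suc (Suc (length zs)))"
    "y = 0 \<Longrightarrow> blockval (y # zs) < FF (Suc (length zs))" and "x = 0 \<or> x = 1 \<and> y = 0"
    by auto
  then show ?case
    using FF_mono[of "Suc (Suc (length zs))" "Suc (Suc (Suc (length zs)))"] by auto
qed auto

lemma dotFhat_less_phi:
  "admissible xs \<Longrightarrow> dotFhat xs < phi \<and> (xs \<noteq> [] \<longrightarrow> hd xs = 0 \<longrightarrow> dotFhat xs < 1)"
proof (induction xs rule: admissible.induct)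
  case (3 x y zs)
  then have IH: "dotFhat (y # zs) < phi" "y = 0 \<Longrightarrow> dotFhat (y # zs) < 1"
    and "x = 0 \<or> x = 1 \<and> y = 0"
    by auto
  then consider "x = 0" | "x = 1" "y = 0" by blast
  then show ?case
  proof cases
    case 1
    have "omega * dotFhat (y # zs) < omega * phi"
      using IH omega_pos by simp
    then show ?thesis using 1 phi_times_omega phi_gt_1 by (simp add: mult.commute)
  next
    case 2
    have "omega * dotFhat (y # zs) < omega"
      using IH 2 omega_pos by simp
    then show ?thesis using 2 omega_eq by simp
  qed
qed (use phi_gt_1 in auto)

lemma admissible_take: "admissible xs \<Longrightarrow> admissible (take s xs)"
  unfolding admissible_iff by (auto dest: in_set_takeD)

lemma admissible_replicate_0_append: "admissible (replicate k 0 @ xs) \<longleftrightarrow> admissible xs"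
  by (induction k) (auto simp: admissible_Cons)

lemma blockval_replicate_0_append: "blockval (replicate k 0 @ xs) = blockval xs"
  by (induction k) auto

lemma lexordp_take: "ord_class.lexordp (take s xs) ys \<Longrightarrow> length ys \<le> s \<Longrightarrow> ord_class.lexordp xs ys"
proof (induction xs arbitrary: s ys)
  case (Cons x xs)
  then show ?case by (cases s; cases ys) fastforce+
qed simp

lemma lexordp_blockval_less:
  "ord_class.lexordp xs ys \<Longrightarrow> length xs = length ys \<Longrightarrow> admissible xs \<Longrightarrow> blockval xs < blockval ys"
proof (induction rule: lexordp_induct)
  case (Cons x xs y ys)
  have "blockval xs < FF (Suc (length ys))"
    using blockval_less_FF[of xs] Cons.prems by (simp add: admissible_Cons)
  moreover have "(x + 1) * FF (Suc (length ys)) \<le> y * FF (Suc (length ys))"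
    using Cons.hyps by (intro mult_le_mono1) simp
  ultimately show ?case
    using Cons.prems(1) by simp
qed (auto simp: admissible_Cons)

lemma lexordp_dotFhat_less:
  "ord_class.lexordp xs ys \<Longrightarrow> length ys \<le> length xs \<Longrightarrow> admissible xs \<Longrightarrow> dotFhat xs < dotFhat ys"
proof (induction rule: lexordp_induct)
  case (Cons x xs y ys)
  have "omega * dotFhat xs < omega * phi"
    using Cons.prems dotFhat_less_phi[of xs] omega_pos by (simp add: admissible_Cons)
  moreover have "omega * dotFhat ys \<ge> 0"
    using dotFhat_nonneg omega_pos by simp
  moreover have "real x + 1 \<le> real y"
    using Cons.hyps by simp
  ultimately show ?case
    using phi_times_omega by (simp add: mult.commute)
next
  case (Cons_eq x xs ys)
  then show ?case using omega_pos by (simp add: admissible_Cons)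
qed simp

lemma is_zeck_iff: "is_zeck m xs \<longleftrightarrow> xs \<noteq> [] \<and> admissible xs \<and> hd xs = 1 \<and> m = blockval xs"
  unfolding is_zeck_def admissible_iff blockval_def by (auto simp: hd_conv_nth)

lemma is_zeck_FF_bounds:
  assumes "is_zeck m xs"
  shows "FF (length xs) \<le> m" "m < FF (Suc (length xs))"
proof -
  obtain ys where xs: "xs = 1 # ys" "admissible xs" "m = blockval xs"
    using assms by (cases xs) (auto simp: is_zeck_iff)
  then show "FF (length xs) \<le> m"
    by simp
  show "m < FF (Suc (length xs))"
    using blockval_less_FF xs(2,3) by blast
qed

lemma FF_bracket_unique:
  assumes "FF L \<le> m" "m < FF (Suc L)" "FF L' \<le> m" "m < FF (Suc L')"
  shows "L = L'"
proof (rule ccontr)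
  assume "L \<noteq> L'"
  then have "Suc L \<le> L' \<or> Suc L' \<le> L" by linarith
  then show False
    using FF_mono assms by (meson leD le_trans)
qed

lemma FF_bracket_exists: "1 \<le> m \<Longrightarrow> \<exists>L. FF (Suc L) \<le> m \<and> m < FF (Suc (Suc L))"
proof (induction m rule: nat_induct_at_least)
  case base
  show ?case by (rule exI[of _ 0]) simp
next
  case (Suc m)
  then obtain L where L: "FF (Suc L) \<le> m" "m < FF (Suc (Suc L))"
    by blast
  show ?case
  proof (cases "Suc m = FF (Suc (Suc L))")
    case True
    then show ?thesis
      using FF_pos[of "Suc L"] by (intro exI[of _ "Suc L"]) simp
  next
    case False
    then show ?thesis
      using L by (intro exI[of _ L]) simp
  qed
qed

lemma is_zeck_unique: "is_zeck m xs \<Longrightarrow> is_zeck m ys \<Longrightarrow> xs = ys"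
proof -
  assume xs: "is_zeck m xs" and ys: "is_zeck m ys"
  then have len: "length xs = length ys"
    using FF_bracket_unique is_zeck_FF_bounds by metis
  then show "xs = ys"
    using lexordp_linear[of xs ys] lexordp_blockval_less[OF _ len] lexordp_blockval_less[OF _ len[symmetric]]
      xs ys by (auto simp: is_zeck_iff)
qed

lemma is_zeck_exists: "1 \<le> m \<Longrightarrow> \<exists>xs. is_zeck m xs"
proof (induction m rule: less_induct)
  case (less m)
  obtain L where L: "FF (Suc L) \<le> m" "m < FF (Suc (Suc L))"
    using FF_bracket_exists less.prems by blast
  define r where "r = m - FF (Suc L)"
  have r: "r < FF L" "m = FF (Suc L) + r"
    using L unfolding r_def by auto
  show ?case
  proof (cases "r = 0")
    case True
    then have "is_zeck m (1 # replicate L 0)"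
      using r blockval_replicate_0_append[of L "[]"] admissible_replicate_0_append[of L "[]"]
      by (simp add: is_zeck_iff admissible_Cons)
    then show ?thesis by blast
  next
    case False
    have "r < m"
      using FF_pos[of "Suc L"] r by simp
    then obtain ys where ys: "is_zeck r ys"
      using less.IH False by force
    have "length ys < L"
      using is_zeck_FF_bounds(1)[OF ys] r FF_mono[of L "length ys"] by linarith
    then obtain k where k: "L = Suc k + length ys"
      using less_iff_Suc_add by auto
    have "is_zeck m (1 # replicate (Suc k) 0 @ ys)"
      using ys r k blockval_replicate_0_append admissible_replicate_0_append
      by (auto simp: is_zeck_iff admissible_Cons)
    then show ?thesis by blast
  qed
qed

lemma is_zeck_zeck: "1 \<le> m \<Longrightarrow> is_zeck m (zeck m)"
  unfolding zeck_def using is_zeck_exists is_zeck_unique by (metis theI)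

lemma zeck_eqI: "is_zeck m xs \<Longrightarrow> zeck m = xs"
  using is_zeck_FF_bounds(1) FF_pos is_zeck_zeck is_zeck_unique by (metis le_trans)

section \<open>Leading blocks\<close>

lemma blockval_less_imp_lexordp:
  assumes "blockval xs < blockval ys" "length xs = length ys" "admissible ys"
  shows "ord_class.lexordp xs ys"
  using lexordp_linear[of xs ys] lexordp_blockval_less[of ys xs] assms by auto

lemma Fblocks_iff:
  assumes "1 \<le> s"
  shows "c \<in> Fblocks s \<longleftrightarrow> length c = s \<and> admissible c \<and> hd c = 1"
proof
  assume "c \<in> Fblocks s"
  then obtain m where m: "1 \<le> m" "s \<le> length (zeck m)" "c = take s (zeck m)"
    unfolding Fblocks_def LB_def LB_defined_def by auto
  then have "admissible (zeck m)" "hd (zeck m) = 1" "zeck m \<noteq> []"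
    using is_zeck_zeck[OF m(1)] by (auto simp: is_zeck_iff)
  then show "length c = s \<and> admissible c \<and> hd c = 1"
    using m assms admissible_take by (auto simp: hd_take)
next
  assume c: "length c = s \<and> admissible c \<and> hd c = 1"
  then have "is_zeck (blockval c) c"
    using assms by (auto simp: is_zeck_iff)
  then have "zeck (blockval c) = c" "1 \<le> blockval c"
    using zeck_eqI is_zeck_FF_bounds(1) FF_pos[of "length c"] le_trans by blast+
  then show "c \<in> Fblocks s"
    unfolding Fblocks_def LB_def LB_defined_def using c by force
qed

lemma LB_definedI:
  assumes "FF s \<le> m"
  shows "LB_defined s m"
proof -
  have "m < FF (Suc (length (zeck m)))"
    using is_zeck_FF_bounds(2) is_zeck_zeck FF_pos[of s] assms by (meson le_trans)
  then show ?thesis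
    unfolding LB_defined_def using FF_mono[of "Suc (length (zeck m))" s] assms by linarith
qed

lemma next_block_not_largest:
  assumes "1 \<le> s" "b \<in> Fblocks s" "\<not> largest_block s b"
  shows "next_block s b \<in> Fblocks s" "blockval (next_block s b) = Suc (blockval b)"
proof -
  define m where "m = Suc (blockval b)"
  obtain c where c: "c \<in> Fblocks s" "blockval b < blockval c"
    using assms unfolding largest_block_def by (auto simp: not_le)
  then have "m < FF (Suc s)"
    using blockval_less_FF[of c] Fblocks_iff[OF assms(1)] m_def by auto
  moreover have "FF s \<le> m"
  proof -
    have "is_zeck (blockval b) b" "length b = s"
      using assms(1,2) by (auto simp: Fblocks_iff is_zeck_iff)
    then show ?thesis
      using is_zeck_FF_bounds(1) m_def by fastforce
  qed
  moreover have z: "is_zeck m (zeck m)"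
    using is_zeck_zeck m_def by simp
  ultimately have "length (zeck m) = s"
    using FF_bracket_unique is_zeck_FF_bounds by metis
  then have zF: "zeck m \<in> Fblocks s" "blockval (zeck m) = m"
    using z assms(1) by (auto simp: Fblocks_iff is_zeck_iff)
  have "(THE c'. c' \<in> Fblocks s \<and> blockval c' = blockval b + 1) = zeck m"
  proof (rule the_equality)
    show "zeck m \<in> Fblocks s \<and> blockval (zeck m) = blockval b + 1"
      using zF m_def by simp
    show "c' = zeck m" if "c' \<in> Fblocks s \<and> blockval c' = blockval b + 1" for c'
    proof -
      have "is_zeck m c'"
        using that assms(1) m_def by (auto simp: Fblocks_iff is_zeck_iff)
      then show ?thesis
        using zeck_eqI by simp
    qed
  qed
  then have "next_block s b = zeck m"
    using assms(3) by (simp add: next_block_def)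
  then show "next_block s b \<in> Fblocks s" "blockval (next_block s b) = Suc (blockval b)"
    using zF m_def by simp_all
qed

lemma special_block_Suc_Suc: "2 \<le> s \<Longrightarrow> special_block (Suc (Suc s)) = 1 # 0 # special_block s"
  unfolding special_block_def
  by (auto simp: map_Suc_upt[symmetric] map_upt_Suc simp del: upt_Suc)

lemma dotFhat_special_block: "2 \<le> s \<Longrightarrow> dotFhat (special_block s) = phi"
proof (induction s rule: less_induct)
  case (less s)
  then obtain k where s: "s = Suc (Suc k)"
    by (metis add_2_eq_Suc le_Suc_ex)
  consider "k = 0" | "k = 1" | "2 \<le> k"
    by linarith
  then show ?case
  proof cases
    case 3
    then have "dotFhat (special_block s) = 1 + omega * (omega * phi)"
      using less.IH[of k] s special_block_Suc_Suc by simp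
    then show ?thesis
      using phi_times_omega omega_eq by (simp add: algebra_simps)
  qed (use s omega_eq in \<open>simp_all add: special_block_def upt_rec\<close>)
qed

lemma dotFhat_next_block_largest:
  "2 \<le> s \<Longrightarrow> largest_block s b \<Longrightarrow> dotFhat (next_block s b) = phi"
  by (simp add: next_block_def dotFhat_special_block)

lemma one_le_dotFhat_next_block:
  assumes "2 \<le> s" "b \<in> Fblocks s"
  shows "1 \<le> dotFhat (next_block s b)"
proof (cases "largest_block s b")
  case True
  then show ?thesis
    using assms dotFhat_next_block_largest phi_gt_1 by simp
next
  case False
  then show ?thesis
    using assms next_block_not_largest(1)[of s b] by (intro dotFhat_ge_1) (auto simp: Fblocks_iff)
qed

lemma take_Fblocks:
  assumes "1 \<le> s" "admissible xs" "hd xs = 1" "s \<le> length xs"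
  shows "take s xs \<in> Fblocks s"
  using assms admissible_take by (auto simp: Fblocks_iff hd_take)

lemma lexordp_take_dotFhat_less:
  assumes "ord_class.lexordp (take s xs) d" "length d = s" "s \<le> length xs" "admissible xs"
  shows "dotFhat xs < dotFhat d"
  using assms lexordp_take[of s xs d] lexordp_dotFhat_less[of xs d] by simp

lemma dotFhat_less_next_block:
  assumes s: "2 \<le> s" and b: "b \<in> Fblocks s"
    and xs: "admissible xs" "s \<le> length xs" "take s xs = b"
  shows "dotFhat xs < dotFhat (next_block s b)"
proof (cases "largest_block s b")
  case True
  then show ?thesis
    using dotFhat_next_block_largest dotFhat_less_phi s xs by simp
next
  case False
  then have "next_block s b \<in> Fblocks s" "blockval b < blockval (next_block s b)"
    using next_block_not_largest[OF _ b] s by simp_all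
  then have "ord_class.lexordp (take s xs) (next_block s b)" "length (next_block s b) = s"
    using s b xs(3) by (auto simp: Fblocks_iff intro: blockval_less_imp_lexordp)
  then show ?thesis
    using lexordp_take_dotFhat_less xs by blast
qed

lemma next_block_le_dotFhat:
  assumes s: "2 \<le> s" and b: "b \<in> Fblocks s"
    and xs: "admissible xs" "hd xs = 1" "s \<le> length xs" "ord_class.lexordp b (take s xs)"
  shows "dotFhat (next_block s b) \<le> dotFhat xs"
proof -
  define c where "c = take s xs"
  define nb where "nb = next_block s b"
  have c: "c \<in> Fblocks s"
    using s xs take_Fblocks unfolding c_def by simp
  then have "blockval b < blockval c"
    using lexordp_blockval_less xs(4) s b by (simp add: Fblocks_iff c_def)
  with c have not_largest: "\<not> largest_block s b"
    by (auto simp: largest_block_def not_le)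
  have nb: "nb \<in> Fblocks s" "blockval nb = Suc (blockval b)"
    using next_block_not_largest[OF _ b not_largest] s unfolding nb_def by simp_all
  then have "\<not> ord_class.lexordp c nb"
    using lexordp_blockval_less[of c nb] c \<open>blockval b < blockval c\<close> s by (auto simp: Fblocks_iff)
  then have "nb = c \<or> ord_class.lexordp nb c"
    using lexordp_linear[of nb c] by blast
  then have "dotFhat nb \<le> dotFhat c"
    using lexordp_dotFhat_less nb c s by (auto simp: Fblocks_iff less_imp_le)
  then show ?thesis
    using dotFhat_take_le[of s xs] unfolding c_def nb_def by simp
qed

lemma take_eq_block_iff_dotFhat:
  assumes s: "2 \<le> s" and b: "b \<in> Fblocks s"
    and xs: "admissible xs" "hd xs = 1" "s \<le> length xs"
  shows "take s xs = b \<longleftrightarrow> dotFhat b \<le> dotFhat xs \<and> dotFhat xs < dotFhat (next_block s b)"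
proof
  assume "take s xs = b"
  then show "dotFhat b \<le> dotFhat xs \<and> dotFhat xs < dotFhat (next_block s b)"
    using dotFhat_take_le[of s xs] dotFhat_less_next_block[OF s b xs(1,3)] by auto
next
  assume window: "dotFhat b \<le> dotFhat xs \<and> dotFhat xs < dotFhat (next_block s b)"
  show "take s xs = b"
  proof (rule ccontr)
    assume "take s xs \<noteq> b"
    then consider "ord_class.lexordp (take s xs) b" | "ord_class.lexordp b (take s xs)"
      using lexordp_linear[of "take s xs" b] by blast
    then show False
    proof cases
      case 1
      then show False
        using lexordp_take_dotFhat_less[OF 1] window s b xs by (simp add: Fblocks_iff)
    next
      case 2
      then show False
        using next_block_le_dotFhat[OF s b xs 2] window by simp
    qed
  qed
qed

section \<open>Fractional parts of frakF_inv\<close>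

lemma sqrt5_frakF: "sqrt 5 * frakF x = phi powr (x + 1) + phi powr (- (x + 1)) * cos (pi * x)"
proof -
  have "- (x + 1) = 1 + (- x + - 2)"
    by simp
  then have "phi powr (- (x + 1)) = phi * (phi powr (- x) * phi powr (- 2))"
    using phi_pos by (simp only: powr_add) simp
  moreover have "phi powr (x + 1) = phi * phi powr x"
    using phi_pos by (simp add: powr_add)
  ultimately show ?thesis
    unfolding frakF_def by (simp add: algebra_simps)
qed

lemma frakF_of_nat: "frakF (real m) = real (FF m)"
proof -
  have p: "phi powr (real m + 1) = phi ^ Suc m"
    using powr_realpow[OF phi_pos, of "Suc m"] by (simp add: add.commute)
  then have q: "phi powr (- (real m + 1)) = omega ^ Suc m"
    by (simp only: powr_minus omega_power_eq)
  have "sqrt 5 * frakF (real m) = phi ^ Suc m + omega ^ Suc m * (- 1) ^ m"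
    unfolding sqrt5_frakF p q by simp
  also have "\<dots> = sqrt 5 * real (FF m)"
  proof -
    have "1 - phi = - omega"
      using omega_eq by simp
    then have "(1 - phi) ^ Suc m = (- 1) ^ Suc m * omega ^ Suc m"
      by (simp only: power_minus[of omega])
    then show ?thesis
      unfolding binet by simp
  qed
  finally show ?thesis
    by simp
qed

lemma frakF_has_real_derivative:
  "(frakF has_real_derivative
     phi / sqrt 5 * (ln phi * phi powr x - phi powr (- x - 2) * (ln phi * cos (pi * x) + pi * sin (pi * x))))
   (at x)"
  unfolding frakF_def
  by (auto intro!: derivative_eq_intros simp: phi_pos powr_diff powr_minus algebra_simps divide_simps)

lemma ln_phi_bounds: "omega\<^sup>2 \<le> ln phi" "ln phi \<le> omega"
proof -
  have "ln omega \<le> omega - 1"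
    using ln_le_minus_one omega_pos by blast
  moreover have "ln omega = - ln phi"
    using phi_pos by (simp add: omega_def ln_div)
  ultimately
  show "omega\<^sup>2 \<le> ln phi"
    using omega_squared by linarith
  show "ln phi \<le> omega"
    using ln_le_minus_one[OF phi_pos] omega_eq by linarith
qed

(* For x >= 2 the growing term ln phi * phi^x >= 1 dominates the oscillating one,
   which is at most 5 * omega^4 < 4/5. *)
lemma frakF_derivative_pos:
  assumes "2 \<le> x"
  shows "0 < ln phi * phi powr x - phi powr (- x - 2) * (ln phi * cos (pi * x) + pi * sin (pi * x))"
proof -
  have "omega\<^sup>2 * phi\<^sup>2 = 1"
    using phi_times_omega by (simp add: power_mult_distrib[symmetric] mult.commute)
  moreover have "phi\<^sup>2 \<le> phi powr x"
    using powr_mono[OF assms, of phi] phi_gt_1 by (simp add: powr_numeral)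
  ultimately have main: "1 \<le> ln phi * phi powr x"
    using ln_phi_bounds(1) mult_mono[of "omega\<^sup>2" "ln phi" "phi\<^sup>2" "phi powr x"] phi_gt_1 by simp
  have "phi powr (- x - 2) \<le> phi powr (- 4)"
    using assms phi_gt_1 by (intro powr_mono) auto
  also have "\<dots> = (omega\<^sup>2)\<^sup>2"
    using phi_pos by (simp add: powr_minus powr_numeral omega_power_eq power_inverse flip: power_mult)
  also have "\<dots> \<le> (2/5)\<^sup>2"
    using omega_squared omega_eq phi_gt_8_5 omega_less_1 by (intro power_mono) auto
  finally have decay: "phi powr (- x - 2) \<le> 4 / 25"
    by (simp add: power2_eq_square)
  have "\<bar>ln phi * cos (pi * x)\<bar> \<le> ln phi" "\<bar>pi * sin (pi * x)\<bar> \<le> pi"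
    using phi_gt_1 abs_cos_le_one abs_sin_le_one by (simp_all add: abs_mult mult_left_le)
  then have "\<bar>ln phi * cos (pi * x) + pi * sin (pi * x)\<bar> \<le> ln phi + pi"
    by linarith
  also have "\<dots> \<le> 5"
    using ln_phi_bounds(2) omega_less_1 pi_less_4 by simp
  finally have oscillation: "\<bar>ln phi * cos (pi * x) + pi * sin (pi * x)\<bar> \<le> 5" .
  have "phi powr (- x - 2) * (ln phi * cos (pi * x) + pi * sin (pi * x))
      \<le> phi powr (- x - 2) * \<bar>ln phi * cos (pi * x) + pi * sin (pi * x)\<bar>"
    by (intro mult_left_mono) auto
  also have "\<dots> \<le> 4 / 25 * 5"
    using decay oscillation by (intro mult_mono) auto
  finally show ?thesis
    using main by simp
qed

lemma frakF_strict_mono: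
  assumes "2 \<le> a" "a < b"
  shows "frakF a < frakF b"
proof (rule DERIV_pos_imp_increasing[OF assms(2)])
  fix x
  assume "a \<le> x"
  then have "0 < phi / sqrt 5 * (ln phi * phi powr x
      - phi powr (- x - 2) * (ln phi * cos (pi * x) + pi * sin (pi * x)))"
    using assms frakF_derivative_pos[of x] phi_pos by simp
  then show "\<exists>y. (frakF has_real_derivative y) (at x) \<and> 0 < y"
    using frakF_has_real_derivative by blast
qed

lemma frakF_less_3:
  assumes "1 \<le> x" "x \<le> 2"
  shows "frakF x < 3"
proof -
  have "phi powr (x + 1) \<le> phi powr 3"
    using assms phi_gt_1 by (intro powr_mono) auto
  also have "\<dots> = 2 * phi + 1"
    using phi_pos phi_squared by (simp add: powr_numeral power3_eq_cube power2_eq_square algebra_simps)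
  finally have "phi powr (x + 1) \<le> 2 * phi + 1" .
  moreover have "phi powr (- (x + 1)) * cos (pi * x) \<le> 1"
  proof -
    have "phi powr (- (x + 1)) \<le> phi powr 0"
      using assms phi_gt_1 by (intro powr_mono) auto
    then have "phi powr (- (x + 1)) \<le> 1"
      using phi_pos by simp
    then show ?thesis
      using mult_left_mono[of "cos (pi * x)" 1 "phi powr (- (x + 1))"] by simp
  qed
  ultimately have "sqrt 5 * frakF x \<le> 2 * phi + 2"
    unfolding sqrt5_frakF by linarith
  also have "\<dots> < sqrt 5 * 3"
    using sqrt5_eq phi_gt_8_5 by simp
  finally show ?thesis
    by simp
qed

lemma frakF_inv_eqI:
  assumes "1 \<le> x" "3 \<le> frakF x"
  shows "frakF_inv (frakF x) = x"
  unfolding frakF_inv_def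
proof (rule the_equality)
  show "1 \<le> x \<and> frakF x = frakF x"
    using assms by simp
  have above_2: "2 < z" if "1 \<le> z" "3 \<le> frakF z" for z
  proof (rule ccontr)
    assume "\<not> 2 < z"
    then have "frakF z < 3"
      using frakF_less_3 that(1) by simp
    then show False
      using that(2) by simp
  qed
  fix y
  assume y: "1 \<le> y \<and> frakF y = frakF x"
  then have "2 < x" "2 < y"
    using above_2 assms by auto
  show "y = x"
  proof (rule ccontr)
    assume "y \<noteq> x"
    then have "frakF y < frakF x \<or> frakF x < frakF y"
      using frakF_strict_mono \<open>2 < x\<close> \<open>2 < y\<close> by (metis less_imp_le linorder_neqE_linordered_idom)
    then show False
      using y by simp
  qed
qed

lemma frakF_inv_bounds:
  assumes "is_zeck K xs" "3 \<le> K"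
  shows "real (length xs) \<le> frakF_inv (real K)" "frakF_inv (real K) < real (length xs) + 1"
    "frakF (frakF_inv (real K)) = real K"
proof -
  define M where "M = length xs"
  have lower: "frakF (real M) \<le> real K" and upper: "real K < frakF (real M + 1)"
    using is_zeck_FF_bounds[OF assms(1)] frakF_of_nat[of M] frakF_of_nat[of "Suc M"]
    by (simp_all add: M_def add.commute)
  moreover have "continuous_on {real M..real M + 1} frakF"
    using frakF_has_real_derivative by (meson DERIV_isCont continuous_at_imp_continuous_on)
  ultimately obtain x where "real M \<le> x" "x \<le> real M + 1" "frakF x = real K"
    using IVT'[of frakF "real M" "real K" "real M + 1"] by auto
  moreover from this have "x \<noteq> real M + 1"
    using upper by auto
  ultimately have x: "real M \<le> x" "x < real M + 1" "frakF x = real K"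
    by auto
  moreover have "1 \<le> M"
    using assms(1) by (cases xs) (auto simp: M_def is_zeck_iff)
  ultimately have "frakF_inv (real K) = x"
    using frakF_inv_eqI[of x] assms(2) by simp
  then show "real (length xs) \<le> frakF_inv (real K)" "frakF_inv (real K) < real (length xs) + 1"
    "frakF (frakF_inv (real K)) = real K"
    using x by (simp_all add: M_def)
qed

lemma sqrt5_frakF_approx:
  assumes "real M \<le> x"
  shows "\<bar>sqrt 5 * frakF x - phi ^ Suc M * phi powr (x - real M)\<bar> \<le> omega ^ Suc M"
proof -
  have "phi powr (x + 1) = phi powr real (Suc M) * phi powr (x - real M)"
    by (simp add: powr_add[symmetric] add.commute)
  then have main: "phi powr (x + 1) = phi ^ Suc M * phi powr (x - real M)"
    using phi_pos by (simp only: powr_realpow)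
  have "\<bar>phi powr (- (x + 1)) * cos (pi * x)\<bar> \<le> phi powr (- (x + 1))"
    using abs_cos_le_one[of "pi * x"] by (simp add: abs_mult mult_left_le)
  also have "\<dots> \<le> phi powr (- real (Suc M))"
    using assms phi_gt_1 by (intro powr_mono) auto
  also have "\<dots> = omega ^ Suc M"
    using phi_pos by (simp only: powr_minus powr_realpow omega_power_eq)
  finally show ?thesis
    unfolding sqrt5_frakF main by simp
qed

lemma abs_one_minus_phi_power: "\<bar>(1 - phi) ^ n\<bar> = omega ^ n"
  using omega_eq phi_gt_1 by (simp add: power_abs)

lemma sqrt5_blockval_approx:
  "set xs \<subseteq> {0, 1} \<Longrightarrow>
     \<bar>sqrt 5 * real (blockval xs) - phi ^ Suc (length xs) * dotFhat xs\<bar> \<le> 1 - omega ^ length xs"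
proof (induction xs)
  case (Cons x xs)
  define L where "L = length xs"
  have "sqrt 5 * real (blockval (x # xs))
      = real x * (sqrt 5 * real (FF (Suc L))) + sqrt 5 * real (blockval xs)"
    by (simp add: L_def algebra_simps)
  also have "\<dots> = real x * (phi ^ Suc (Suc L) - (1 - phi) ^ Suc (Suc L)) + sqrt 5 * real (blockval xs)"
    by (simp only: binet)
  finally have bv: "sqrt 5 * real (blockval (x # xs))
      = real x * (phi ^ Suc (Suc L) - (1 - phi) ^ Suc (Suc L)) + sqrt 5 * real (blockval xs)" .
  have "omega * phi ^ Suc (Suc L) = (phi * omega) * phi ^ Suc L"
    by (simp add: algebra_simps)
  then have dot: "phi ^ Suc (Suc L) * dotFhat (x # xs) = real x * phi ^ Suc (Suc L) + phi ^ Suc L * dotFhat xs"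
    using phi_times_omega by (simp add: algebra_simps)
  have "\<bar>sqrt 5 * real (blockval (x # xs)) - phi ^ Suc (Suc L) * dotFhat (x # xs)\<bar>
      = \<bar>- real x * (1 - phi) ^ Suc (Suc L) + (sqrt 5 * real (blockval xs) - phi ^ Suc L * dotFhat xs)\<bar>"
    unfolding bv dot by (simp add: algebra_simps del: power_Suc)
  also have "\<dots> \<le> omega ^ Suc (Suc L) + (1 - omega ^ L)"
  proof (rule order_trans[OF abs_triangle_ineq add_mono])
    show "\<bar>- real x * (1 - phi) ^ Suc (Suc L)\<bar> \<le> omega ^ Suc (Suc L)"
      using Cons.prems omega_pos abs_one_minus_phi_power[of "Suc (Suc L)"]
      by (auto simp: abs_mult mult_le_cancel_right1 simp del: power_Suc)
    show "\<bar>sqrt 5 * real (blockval xs) - phi ^ Suc L * dotFhat xs\<bar> \<le> 1 - omega ^ L"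
      using Cons L_def by simp
  qed
  also have "\<dots> = 1 - omega ^ Suc L"
  proof -
    have "omega ^ Suc (Suc L) + omega ^ Suc L = omega ^ L * (omega\<^sup>2 + omega)"
      by (simp add: power2_eq_square algebra_simps)
    then show ?thesis
      using omega_squared by simp
  qed
  finally show ?case
    by (simp add: L_def)
qed simp

lemma sqrt5_zeck_approx:
  assumes "is_zeck K xs"
  shows "\<bar>sqrt 5 * real K - phi ^ Suc (length xs) * dotFhat xs\<bar> \<le> 1"
proof -
  have "set xs \<subseteq> {0, 1}" "K = blockval xs"
    using assms by (auto simp: is_zeck_iff admissible_iff)
  then have "\<bar>sqrt 5 * real K - phi ^ Suc (length xs) * dotFhat xs\<bar> \<le> 1 - omega ^ length xs"
    using sqrt5_blockval_approx by simp
  moreover have "0 \<le> omega ^ length xs"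
    using omega_pos by simp
  ultimately show ?thesis
    by linarith
qed

lemma frac_frakF_inv:
  assumes "is_zeck K xs" "3 \<le> K"
  shows "frac (frakF_inv (real K)) = frakF_inv (real K) - real (length xs)"
proof -
  have "\<lfloor>frakF_inv (real K)\<rfloor> = int (length xs)"
    using frakF_inv_bounds[OF assms] by (simp add: floor_eq_iff)
  then show ?thesis
    by (simp add: frac_def)
qed

lemma sqrt5_frakF_inv_approx:
  assumes "is_zeck K xs" "3 \<le> K"
  shows "\<bar>sqrt 5 * real K - phi ^ Suc (length xs) * phi powr frac (frakF_inv (real K))\<bar> \<le> 1"
proof -
  have "\<bar>sqrt 5 * real K - phi ^ Suc (length xs) * phi powr frac (frakF_inv (real K))\<bar>
      \<le> omega ^ Suc (length xs)"
    using sqrt5_frakF_approx[OF frakF_inv_bounds(1)[OF assms]]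
    unfolding frakF_inv_bounds(3)[OF assms] frac_frakF_inv[OF assms, symmetric] .
  also have "\<dots> \<le> 1"
    using omega_pos omega_less_1 by (intro power_le_one) auto
  finally show ?thesis .
qed

lemma phi_powr_frac_frakF_inv_approx:
  assumes zeck: "is_zeck K xs" and K: "3 \<le> K"
  shows "\<bar>phi powr frac (frakF_inv (real K)) - dotFhat xs\<bar> \<le> 2 * phi / (sqrt 5 * real K - 1)"
proof -
  define P where "P = phi ^ Suc (length xs)"
  define p where "p = phi powr frac (frakF_inv (real K))"
  define D where "D = dotFhat xs"
  have digit_error: "\<bar>sqrt 5 * real K - P * D\<bar> \<le> 1"
    using sqrt5_zeck_approx[OF zeck] by (simp add: P_def D_def)
  have frakF_error: "\<bar>sqrt 5 * real K - P * p\<bar> \<le> 1"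
    using sqrt5_frakF_inv_approx[OF zeck K] by (simp add: P_def p_def)
  have "P > 0"
    unfolding P_def using phi_pos by simp
  have "\<bar>P * (p - D)\<bar> = P * \<bar>p - D\<bar>"
    using \<open>P > 0\<close> by (simp add: abs_mult)
  moreover have "P * (p - D) = (sqrt 5 * real K - P * D) - (sqrt 5 * real K - P * p)"
    by (simp add: algebra_simps)
  ultimately have "P * \<bar>p - D\<bar> \<le> 2"
    using digit_error frakF_error abs_triangle_ineq4[of "sqrt 5 * real K - P * D"] by linarith
  then have "\<bar>p - D\<bar> \<le> 2 * phi / (P * phi)"
    using \<open>P > 0\<close> phi_pos by (simp add: pos_le_divide_eq mult.commute)
  also have "\<dots> \<le> 2 * phi / (sqrt 5 * real K - 1)"
  proof (rule divide_left_mono)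
    have "sqrt 5 * real K - 1 \<le> P * D"
      using digit_error by linarith
    also have "\<dots> < P * phi"
      using dotFhat_less_phi zeck \<open>P > 0\<close> by (simp add: D_def is_zeck_iff)
    finally show "sqrt 5 * real K - 1 \<le> P * phi"
      by simp
    have "0 < sqrt 5 * real K - 1"
      using K sqrt5_eq phi_gt_1 mult_mono[of 1 "sqrt 5" 3 "real K"] by simp
    then show "0 < P * phi * (sqrt 5 * real K - 1)"
      using \<open>P > 0\<close> phi_pos by simp
  qed (use phi_pos in simp)
  finally show ?thesis
    unfolding p_def D_def .
qed

lemma approx_error_bounds:
  assumes "3 \<le> K"
  shows "0 < 2 * phi / (sqrt 5 * real K - 1)" "2 * phi / (sqrt 5 * real K - 1) < 1"
proof -
  have "2 * phi < sqrt 5 * real K - 1"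
    using assms sqrt5_eq phi_gt_1 mult_left_mono[of 3 "real K" "sqrt 5"] by simp
  then show "0 < 2 * phi / (sqrt 5 * real K - 1)" "2 * phi / (sqrt 5 * real K - 1) < 1"
    using phi_pos by simp_all
qed

section \<open>Perturbed windows\<close>

lemma log_le_of_powr_approx:
  fixes c a e t D :: real
  assumes "1 < c" "1 \<le> a" "0 < e" "e < 1" "\<bar>c powr t - D\<bar> \<le> e" "a \<le> D"
  shows "log c a + log c (1 - e) \<le> t"
proof -
  have "e \<le> a * e" "D - c powr t \<le> e" "a * (1 - e) = a - a * e"
    using assms mult_right_mono[of 1 a e] by (simp_all add: abs_le_iff algebra_simps)
  then have "a * (1 - e) \<le> c powr t"
    using assms(6) by linarith
  then have "log c (a * (1 - e)) \<le> t"
    using assms by (simp add: log_le_iff)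
  then show ?thesis
    using assms by (simp add: log_mult)
qed

lemma less_log_of_powr_approx:
  fixes c a e t D :: real
  assumes "1 < c" "1 \<le> a" "0 < e" "e < 1" "\<bar>c powr t - D\<bar> \<le> e" "D < a"
  shows "t < log c a - log c (1 - e)"
proof -
  have "(a + e) * (1 - e) \<le> a"
    using assms mult_nonneg_nonneg[of e "a + e - 1"] by (simp add: algebra_simps)
  then have "a + e \<le> a / (1 - e)"
    using assms by (simp add: pos_le_divide_eq)
  then have "c powr t < a / (1 - e)"
    using assms by (simp add: abs_le_iff)
  then have "t < log c (a / (1 - e))"
    using assms by (simp add: less_log_iff)
  then show ?thesis
    using assms by (simp add: log_divide)
qed

lemma tendsto_eventually_patch:
  fixes f :: "nat \<Rightarrow> 'a::topological_space"
  assumes "f \<longlonglongrightarrow> L" "eventually (\<lambda>n. P n (f n)) sequentially" "\<And>n. \<exists>y. P n y"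
  shows "\<exists>g. g \<longlonglongrightarrow> L \<and> (\<forall>n. P n (g n))"
proof -
  define g where "g n = (if P n (f n) then f n else (SOME y. P n y))" for n
  have "eventually (\<lambda>n. f n = g n) sequentially"
    using assms(2) by eventually_elim (simp add: g_def)
  then have "g \<longlonglongrightarrow> L"
    by (rule Lim_transform_eventually[OF assms(1)])
  moreover have "P n (g n)" for n
    using someI_ex[OF assms(3)[of n]] by (simp add: g_def)
  ultimately show ?thesis
    by blast
qed

lemma threshold_perturbation:
  fixes t \<eta> :: "nat \<Rightarrow> real"
  assumes "\<eta> \<longlonglongrightarrow> 0"
    and "eventually (\<lambda>n. (A n \<longrightarrow> lo - \<eta> n \<le> t n) \<and> (\<not> A n \<longrightarrow> t n < lo + \<eta> n)) sequentially"
  shows "\<exists>\<gamma>. \<gamma> \<longlonglongrightarrow> 0 \<and> (\<forall>n. A n \<longleftrightarrow> lo + \<gamma> n \<le> t n)"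
proof (rule tendsto_eventually_patch)
  define f where "f n = (if A n then - \<bar>\<eta> n\<bar> else \<bar>\<eta> n\<bar>)" for n
  have "(\<lambda>n. \<bar>f n\<bar>) = (\<lambda>n. \<bar>\<eta> n\<bar>)"
    by (intro ext) (simp add: f_def)
  then have "(\<lambda>n. \<bar>f n\<bar>) \<longlonglongrightarrow> 0"
    using tendsto_rabs_zero[OF assms(1)] by simp
  then show "f \<longlonglongrightarrow> 0"
    by (rule tendsto_rabs_zero_cancel)
  show "eventually (\<lambda>n. A n \<longleftrightarrow> lo + f n \<le> t n) sequentially"
    using assms(2) by eventually_elim (auto simp: f_def)
  show "\<exists>y. A n \<longleftrightarrow> lo + y \<le> t n" for n
    by (cases "A n") (auto intro: exI[of _ "t n - lo"] exI[of _ "t n - lo + 1"])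
qed

lemma window_perturbation:
  fixes t \<eta> :: "nat \<Rightarrow> real"
  assumes "\<eta> \<longlonglongrightarrow> 0"
    and "eventually (\<lambda>n. (A n \<longrightarrow> lo - \<eta> n \<le> t n \<and> t n < up + \<eta> n)
           \<and> (\<not> A n \<longrightarrow> t n < lo + \<eta> n \<or> up - \<eta> n \<le> t n)) sequentially"
  shows "\<exists>\<gamma> \<gamma>'. \<gamma> \<longlonglongrightarrow> 0 \<and> \<gamma>' \<longlonglongrightarrow> 0 \<and> (\<forall>n. A n \<longleftrightarrow> lo + \<gamma> n \<le> t n \<and> t n < up + \<gamma>' n)"
proof -
  define below where "below n \<longleftrightarrow> \<not> A n \<and> t n < lo + \<eta> n" for n
  define above where "above n \<longleftrightarrow> \<not> A n \<and> \<not> t n < lo + \<eta> n" for n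
  define f where "f n = (if below n then \<bar>\<eta> n\<bar> else - \<bar>\<eta> n\<bar>, if above n then - \<bar>\<eta> n\<bar> else \<bar>\<eta> n\<bar>)"
    for n
  have "(\<lambda>n. \<bar>fst (f n)\<bar>) = (\<lambda>n. \<bar>\<eta> n\<bar>)" "(\<lambda>n. \<bar>snd (f n)\<bar>) = (\<lambda>n. \<bar>\<eta> n\<bar>)"
    by (intro ext, simp add: f_def)+
  then have "(\<lambda>n. \<bar>fst (f n)\<bar>) \<longlonglongrightarrow> 0" "(\<lambda>n. \<bar>snd (f n)\<bar>) \<longlonglongrightarrow> 0"
    using tendsto_rabs_zero[OF assms(1)] by simp_all
  then have "(\<lambda>n. fst (f n)) \<longlonglongrightarrow> 0" "(\<lambda>n. snd (f n)) \<longlonglongrightarrow> 0"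
    by (simp_all add: tendsto_rabs_zero_cancel)
  then have "f \<longlonglongrightarrow> (0, 0)"
    using tendsto_Pair[of "\<lambda>n. fst (f n)" 0 sequentially "\<lambda>n. snd (f n)" 0] by simp
  moreover have "eventually (\<lambda>n. A n \<longleftrightarrow> lo + fst (f n) \<le> t n \<and> t n < up + snd (f n)) sequentially"
    using assms(2) by eventually_elim (auto simp: f_def below_def above_def)
  moreover have "\<exists>y. A n \<longleftrightarrow> lo + fst y \<le> t n \<and> t n < up + snd y" for n
  proof (cases "A n")
    case True
    then show ?thesis by (intro exI[of _ "(t n - lo, t n - up + 1)"]) simp
  next
    case False
    then show ?thesis by (intro exI[of _ "(t n - lo + 1, 0)"]) simp
  qed
  ultimately obtain g where g: "g \<longlonglongrightarrow> (0, 0)"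
    and "\<forall>n. A n \<longleftrightarrow> lo + fst (g n) \<le> t n \<and> t n < up + snd (g n)"
    using tendsto_eventually_patch[of f "(0, 0)" "\<lambda>n y. A n \<longleftrightarrow> lo + fst y \<le> t n \<and> t n < up + snd y"]
    by blast
  moreover have "(\<lambda>n. fst (g n)) \<longlonglongrightarrow> 0" "(\<lambda>n. snd (g n)) \<longlonglongrightarrow> 0"
    using tendsto_fst[OF g] tendsto_snd[OF g] by simp_all
  ultimately show ?thesis
    by blast
qed

lemma perturbed_window:
  fixes t \<eta> :: "nat \<Rightarrow> real"
  assumes "\<eta> \<longlonglongrightarrow> 0"
    and "eventually (\<lambda>n. (A n \<longrightarrow> lo - \<eta> n \<le> t n \<and> t n < up + \<eta> n)
           \<and> (\<not> A n \<longrightarrow> t n < lo + \<eta> n \<or> \<not> P \<and> up - \<eta> n \<le> t n)) sequentially"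
    and "P \<Longrightarrow> \<forall>n. t n < up"
  shows "\<exists>\<gamma> \<gamma>'. \<gamma> \<longlonglongrightarrow> 0 \<and> \<gamma>' \<longlonglongrightarrow> 0 \<and> (P \<longrightarrow> (\<forall>n. \<gamma>' n = 0))
           \<and> (\<forall>n. A n \<longleftrightarrow> lo + \<gamma> n \<le> t n \<and> t n < up + \<gamma>' n)"
proof (cases P)
  case True
  then obtain \<gamma> where "\<gamma> \<longlonglongrightarrow> 0" "\<forall>n. A n \<longleftrightarrow> lo + \<gamma> n \<le> t n"
    using threshold_perturbation[OF assms(1), of A lo t] eventually_mono[OF assms(2)] by auto
  moreover have "\<forall>n. t n < up + 0"
    using True assms(3) by simp
  ultimately show ?thesis
    using True by (intro exI[of _ \<gamma>] exI[of _ "\<lambda>_. 0"]) simp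
next
  case False
  then show ?thesis
    using window_perturbation[OF assms(1), of A lo t up] assms(2) by auto
qed

section \<open>Leading blocks of K n\<close>

(* The bound of phi_powr_frac_frakF_inv_approx, transported through log phi. *)
definition window_error :: "nat \<Rightarrow> real" where
  "window_error K = - log phi (1 - 2 * phi / (sqrt 5 * real K - 1))"

lemma window_error_tendsto_0:
  fixes K :: "nat \<Rightarrow> nat"
  assumes "filterlim K at_top sequentially"
  shows "(\<lambda>n. window_error (K n)) \<longlonglongrightarrow> 0"
proof -
  have "filterlim (\<lambda>n. sqrt 5 * real (K n)) at_top sequentially"
    using filterlim_compose[OF filterlim_real_sequentially assms]
    by (rule filterlim_tendsto_pos_mult_at_top[OF tendsto_const, rotated]) simp
  then have "filterlim (\<lambda>n. - 1 + sqrt 5 * real (K n)) at_top sequentially"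
    by (rule filterlim_tendsto_add_at_top[OF tendsto_const])
  then have "(\<lambda>n. 2 * phi / (sqrt 5 * real (K n) - 1)) \<longlonglongrightarrow> 0"
    by (intro tendsto_divide_0[OF tendsto_const] filterlim_at_top_imp_at_infinity) simp
  then have "(\<lambda>n. - log phi (1 - 2 * phi / (sqrt 5 * real (K n) - 1))) \<longlonglongrightarrow> - log phi (1 - 0)"
    using phi_gt_1 by (intro tendsto_intros) auto
  then show ?thesis
    by (simp add: window_error_def)
qed

lemma frac_frakF_inv_window:
  assumes s: "2 \<le> s" and b: "b \<in> Fblocks s" and K: "3 \<le> K" "FF s \<le> K"
  defines "t \<equiv> frac (frakF_inv (real K))" and "\<eta> \<equiv> window_error K"
    and "lo \<equiv> log phi (dotFhat b)" and "up \<equiv> log phi (dotFhat (next_block s b))"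
  shows "LB_defined s K"
    and "LB s K = b \<Longrightarrow> lo - \<eta> \<le> t \<and> t < up + \<eta>"
    and "LB s K \<noteq> b \<Longrightarrow> t < lo + \<eta> \<or> \<not> largest_block s b \<and> up - \<eta> \<le> t"
proof -
  define xs where "xs = zeck K"
  define D where "D = dotFhat xs"
  define e where "e = 2 * phi / (sqrt 5 * real K - 1)"
  have xs: "is_zeck K xs"
    using is_zeck_zeck K by (simp add: xs_def)
  show "LB_defined s K"
    using LB_definedI K(2) .
  then have window: "LB s K = b \<longleftrightarrow> dotFhat b \<le> D \<and> D < dotFhat (next_block s b)"
    using take_eq_block_iff_dotFhat[OF s b] xs
    by (simp add: LB_def LB_defined_def D_def xs_def is_zeck_iff)
  have approx: "\<bar>phi powr t - D\<bar> \<le> e"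
    using phi_powr_frac_frakF_inv_approx[OF xs K(1)] by (simp add: t_def D_def e_def)
  have e: "0 < e" "e < 1"
    using approx_error_bounds[OF K(1)] by (simp_all add: e_def)
  have \<eta>: "\<eta> = - log phi (1 - e)"
    by (simp add: \<eta>_def window_error_def e_def)
  have one_le: "1 \<le> dotFhat b" "1 \<le> dotFhat (next_block s b)"
    using s b one_le_dotFhat_next_block by (auto intro: dotFhat_ge_1 simp: Fblocks_iff)
  note lower = log_le_of_powr_approx[OF phi_gt_1 _ e approx]
  note upper = less_log_of_powr_approx[OF phi_gt_1 _ e approx]
  show "lo - \<eta> \<le> t \<and> t < up + \<eta>" if "LB s K = b"
    using that window lower[OF one_le(1)] upper[OF one_le(2)] unfolding lo_def up_def \<eta> by simp
  have "D < phi"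
    using xs dotFhat_less_phi by (auto simp: D_def is_zeck_iff)
  then have not_largest: "\<not> largest_block s b" if "dotFhat (next_block s b) \<le> D"
    using that s dotFhat_next_block_largest by fastforce
  show "t < lo + \<eta> \<or> \<not> largest_block s b \<and> up - \<eta> \<le> t" if "LB s K \<noteq> b"
  proof (cases "D < dotFhat b")
    case True
    then show ?thesis
      using upper[OF one_le(1)] unfolding lo_def \<eta> by simp
  next
    case False
    then have "dotFhat (next_block s b) \<le> D"
      using that window by simp
    then show ?thesis
      using not_largest lower[OF one_le(2)] unfolding up_def \<eta> by simp
  qed
qed

theorem lemma4p4:
  fixes K :: "nat \<Rightarrow> nat" and s :: nat and b :: "nat list"
  assumes Kpos: "\<And>n. K n > 0"
    and Klim: "filterlim K at_top sequentially"
    and s2: "s \<ge> 2"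
    and bF: "b \<in> Fblocks s"
  shows "\<exists>\<gamma> \<gamma>' :: nat \<Rightarrow> real.
           \<gamma> \<longlonglongrightarrow> 0 \<and> \<gamma>' \<longlonglongrightarrow> 0
         \<and> (largest_block s b \<longrightarrow> (\<forall>n. \<gamma>' n = 0))
         \<and> (\<forall>n. n \<in> {n. LB_defined s (K n) \<and> LB s (K n) = b} \<longleftrightarrow>
               log phi (dotFhat b) + \<gamma> n \<le> frac (frakF_inv (real (K n)))
             \<and> frac (frakF_inv (real (K n))) < log phi (dotFhat (next_block s b)) + \<gamma>' n)"
proof -
  let ?A = "\<lambda>n. LB_defined s (K n) \<and> LB s (K n) = b"
  let ?t = "\<lambda>n. frac (frakF_inv (real (K n)))"
  let ?lo = "log phi (dotFhat b)" and ?up = "log phi (dotFhat (next_block s b))"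
  have "(?A n \<longrightarrow> ?lo - window_error (K n) \<le> ?t n \<and> ?t n < ?up + window_error (K n))
      \<and> (\<not> ?A n \<longrightarrow> ?t n < ?lo + window_error (K n)
          \<or> \<not> largest_block s b \<and> ?up - window_error (K n) \<le> ?t n)"
    if "max 3 (FF s) \<le> K n" for n
    using frac_frakF_inv_window[OF s2 bF, of "K n"] that by (cases "LB s (K n) = b") simp_all
  moreover have "eventually (\<lambda>n. max 3 (FF s) \<le> K n) sequentially"
    using Klim unfolding filterlim_at_top by blast
  moreover have "\<forall>n. ?t n < ?up" if "largest_block s b"
    using dotFhat_next_block_largest[OF s2 that] phi_gt_1 by (simp add: frac_lt_1)
  ultimately show ?thesis
    using perturbed_window[OF window_error_tendsto_0[OF Klim], of ?A ?lo ?t ?up "largest_block s b"]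
    by (simp add: eventually_mono)
qed

end
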